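(* Let $e,h\in\omega^\omega$ be nondecreasing and unbounded, and suppose $e(l)\le\min\{n\in\omega: l<h(2^n)\}$ for all $l\in\omega$. Then $\mathcal{N}^{e^*}\subseteq\mathcal{J}_h$.
   Context: $2^\omega$ carries the metric $d(x,y)=2^{-\min\{n:x(n)\neq y(n)\}}$ for $x\neq y$ and $d(x,x)=0$. A gauge function is a nondecreasing $f\colon[0,\infty)\to[0,\infty)$ with $f(0)=0$, $\lim_{x\to0}f(x)=0$; $\mathcal{H}^f(A)=\lim_{\delta\to0}\inf\{\sum_nf(\operatorname{diam}C_n):A\subseteq\bigcup_nC_n,\ \operatorname{diam}C_n\le\delta\}$ and $\mathcal{N}^f=\{A\subseteq2^\omega:\mathcal{H}^f(A)=0\}$. For nondecreasing unbounded $e\in\omega^\omega$, $e^*$ is the gauge function with $e^*(0)=0$, $e^*(2^{-k})=2^{-e(k)}$ for all $k\in\omega$, linear on each interval $[2^{-k-1},2^{-k}]$ (and constant on $[1,\infty)$). For $\sigma\in(2^{<\omega})^\omega$, $(\operatorname{ht}\sigma)(n)=|\sigma(n)|$ and $[\sigma]_\infty=\{x\in2^\omega:\exists^\infty n\ \sigma(n)\subseteq x\}$; for $g\in\omega^\omega$, $\mathcal{J}_g=\{A\subseteq2^\omega:\exists\sigma\in(2^{<\omega})^\omega\,(\operatorname{ht}\sigma=g\wedge A\subseteq[\sigma]_\infty)\}$. *)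

theory Defs
  imports "HOL-Analysis.Analysis"
begin

definition cantor_dist :: "(nat \<Rightarrow> bool) \<Rightarrow> (nat \<Rightarrow> bool) \<Rightarrow> real" where
  "cantor_dist x y = (if x = y then 0 else (1/2) ^ (LEAST n. x n \<noteq> y n))"

definition cantor_diam :: "(nat \<Rightarrow> bool) set \<Rightarrow> real" where
  "cantor_diam C = (if C = {} then 0 else (SUP p\<in>C \<times> C. cantor_dist (fst p) (snd p)))"

definition hausdorff_delta :: "(real \<Rightarrow> real) \<Rightarrow> real \<Rightarrow> (nat \<Rightarrow> bool) set \<Rightarrow> ennreal" where
  "hausdorff_delta f \<delta> A =
     (INF C\<in>{C :: nat \<Rightarrow> (nat \<Rightarrow> bool) set. A \<subseteq> (\<Union>n. C n) \<and> (\<forall>n. cantor_diam (C n) \<le> \<delta>)}.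
        (\<Sum>n. ennreal (f (cantor_diam (C n)))))"

definition hausdorff :: "(real \<Rightarrow> real) \<Rightarrow> (nat \<Rightarrow> bool) set \<Rightarrow> ennreal" where
  "hausdorff f A = Lim (at_right (0::real)) (\<lambda>\<delta>. hausdorff_delta f \<delta> A)"

definition null_f :: "(real \<Rightarrow> real) \<Rightarrow> (nat \<Rightarrow> bool) set set" where
  "null_f f = {A. hausdorff f A = 0}"

text \<open>The gauge e^*: e^*(0)=0, e^*(2^-k) = 2^-e(k), linear on [2^-(k+1), 2^-k],
  constant on [1,\<infinity>).  For 0 < x < 1, k = floor(-log2 x) gives 2^-(k+1) < x \<le> 2^-k.\<close>
definition estar :: "(nat \<Rightarrow> nat) \<Rightarrow> real \<Rightarrow> real" where
  "estar e x =
     (if x \<le> 0 then 0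
      else if 1 \<le> x then (1/2) ^ e 0
      else (let k = nat \<lfloor>- log 2 x\<rfloor>;
                a = (1/2) ^ (k+1); b = (1/2) ^ k
            in (1/2) ^ e (k+1) + (x - a) / (b - a) * ((1/2) ^ e k - (1/2) ^ e (k+1))))"

definition init_seg :: "bool list \<Rightarrow> (nat \<Rightarrow> bool) \<Rightarrow> bool" where
  "init_seg s x \<longleftrightarrow> (\<forall>i<length s. x i = s ! i)"

definition inf_often_set :: "(nat \<Rightarrow> bool list) \<Rightarrow> (nat \<Rightarrow> bool) set" where
  "inf_often_set \<sigma> = {x. \<exists>\<^sub>\<infinity> n. init_seg (\<sigma> n) x}"

definition J_ideal :: "(nat \<Rightarrow> nat) \<Rightarrow> (nat \<Rightarrow> bool) set set" where
  "J_ideal g = {A. \<exists>\<sigma>. (\<forall>n. length (\<sigma> n) = g n) \<and> A \<subseteq> inf_often_set \<sigma>}"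

end

theory Submission
  imports Defs
begin

text \<open>At stage j cover A by sets of diameter at most 2^-K(j), where
  e(K j) >= j + 3, with total e*-cost below 2^-(j+4). A cover set with two points has diameter
  2^-l, all its points share a prefix of length l, and it costs 2^-e(l); so over all stages at
  most 2^k such sets have e(l) = k + 3. They can therefore be numbered injectively by indices
  below 2^(k+2) = 2^(e(l)-1), and the hypothesis on e gives h(index) <= l: the length-h prefix
  at that index is shared by the whole set. Each point of A lies in one cover set per stage,
  hence extends infinitely many of these prefixes.\<close>

definition same_prefix :: "(nat \<Rightarrow> bool) set \<Rightarrow> nat \<Rightarrow> bool" where
  "same_prefix C l \<longleftrightarrow> (\<forall>x\<in>C. \<forall>y\<in>C. \<forall>i<l. x i = y i)"

definition nontrivial :: "'a set \<Rightarrow> bool" where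
  "nontrivial C \<longleftrightarrow> (\<exists>x\<in>C. \<exists>y\<in>C. x \<noteq> y)"

definition diam_exponent :: "(nat \<Rightarrow> bool) set \<Rightarrow> nat" where
  "diam_exponent C = (LEAST l. cantor_diam C = (1/2)^l)"

lemma estar_half_power: "estar e ((1/2)^l) = (1/2)^e l"
proof (cases "l = 0")
  case True
  then show ?thesis by (simp add: estar_def)
next
  case False
  then have "(1/2::real)^l < 1" by (simp add: power_less_one_iff)
  moreover have "nat \<lfloor>- log 2 ((1/2::real)^l)\<rfloor> = l"
    by (simp add: log_nat_power log_divide)
  ultimately show ?thesis by (simp add: estar_def Let_def not_le)
qed

lemma hausdorff_delta_antimono:
  assumes "\<delta> \<le> \<delta>'"
  shows "hausdorff_delta f \<delta>' A \<le> hausdorff_delta f \<delta> A"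
  unfolding hausdorff_delta_def
  by (rule INF_superset_mono) (use assms in \<open>auto intro: order_trans\<close>)

lemma hausdorff_eq_SUP: "hausdorff f A = (SUP \<delta>\<in>{0<..}. hausdorff_delta f \<delta> A)"
proof -
  define S where "S = (SUP \<delta>\<in>{0<..}. hausdorff_delta f \<delta> A)"
  have "((\<lambda>\<delta>. hausdorff_delta f \<delta> A) \<longlongrightarrow> S) (at_right 0)"
  proof (rule order_tendstoI)
    fix a assume "a < S"
    then obtain \<delta> where "\<delta> > 0" "a < hausdorff_delta f \<delta> A"
      unfolding S_def by (auto simp: less_SUP_iff)
    then show "\<forall>\<^sub>F \<delta>' in at_right 0. a < hausdorff_delta f \<delta>' A"
      unfolding eventually_at_right_field
      by (intro exI[of _ \<delta>]) (auto intro: less_le_trans[OF _ hausdorff_delta_antimono])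
  next
    fix a assume "S < a"
    moreover have "hausdorff_delta f \<delta> A \<le> S" if "\<delta> > 0" for \<delta>
      unfolding S_def using that by (intro SUP_upper) auto
    ultimately show "\<forall>\<^sub>F \<delta> in at_right 0. hausdorff_delta f \<delta> A < a"
      unfolding eventually_at_right_field by (intro exI[of _ 1]) force
  qed
  then show ?thesis
    unfolding hausdorff_def S_def by (intro tendsto_Lim) auto
qed

lemma hausdorff_eq_0_imp_cover:
  assumes "hausdorff f A = 0" "\<delta> > 0" "\<epsilon> > 0"
  obtains C where "A \<subseteq> (\<Union>n. C n)" "\<And>n. cantor_diam (C n) \<le> \<delta>"
    "(\<Sum>n. ennreal (f (cantor_diam (C n)))) < ennreal \<epsilon>"
proof -
  have "hausdorff_delta f \<delta> A = 0"
    using assms(1,2) unfolding hausdorff_eq_SUP by (auto simp: SUP_eq_iff)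
  then have "hausdorff_delta f \<delta> A < ennreal \<epsilon>"
    using assms(3) by simp
  then show ?thesis
    unfolding hausdorff_delta_def INF_less_iff using that by blast
qed

lemma cantor_diam_nontrivial:
  assumes "nontrivial C"
  obtains l where "cantor_diam C = (1/2)^l" "same_prefix C l"
proof -
  obtain x0 y0 where "x0 \<in> C" "y0 \<in> C" "x0 \<noteq> y0"
    using assms unfolding nontrivial_def by blast
  let ?diff = "\<lambda>x y. LEAST n. x n \<noteq> y n"
  define l where "l = (LEAST m. \<exists>x\<in>C. \<exists>y\<in>C. x \<noteq> y \<and> ?diff x y = m)"
  have attained: "\<exists>x\<in>C. \<exists>y\<in>C. x \<noteq> y \<and> ?diff x y = l"
    unfolding l_def by (rule LeastI[of _ "?diff x0 y0"]) (use \<open>x0 \<in> C\<close> \<open>y0 \<in> C\<close> \<open>x0 \<noteq> y0\<close> in auto)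
  have least: "l \<le> ?diff x y" if "x \<in> C" "y \<in> C" "x \<noteq> y" for x y
    unfolding l_def by (rule Least_le) (use that in auto)
  have "same_prefix C l"
    unfolding same_prefix_def
  proof (intro ballI allI impI, rule ccontr)
    fix x y i assume "x \<in> C" "y \<in> C" "i < l" "x i \<noteq> y i"
    moreover from this have "?diff x y \<le> i" by (intro Least_le)
    ultimately show False using least by fastforce
  qed
  moreover have "C \<noteq> {}" using \<open>x0 \<in> C\<close> by auto
  then have "cantor_diam C = (1/2)^l"
    unfolding cantor_diam_def if_not_P[OF \<open>C \<noteq> {}\<close>]
  proof (intro cSup_eq_maximum)
    show "(1/2)^l \<in> (\<lambda>p. cantor_dist (fst p) (snd p)) ` (C \<times> C)"
      using attained by (force simp: cantor_dist_def)
  next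
    fix d assume "d \<in> (\<lambda>p. cantor_dist (fst p) (snd p)) ` (C \<times> C)"
    then obtain x y where "x \<in> C" "y \<in> C" "d = cantor_dist x y" by auto
    then show "d \<le> (1/2)^l"
      using least[of x y] by (auto simp: cantor_dist_def power_decreasing)
  qed
  ultimately show ?thesis using that by blast
qed

lemma diam_exponent:
  assumes "nontrivial C"
  shows "cantor_diam C = (1/2)^diam_exponent C" "same_prefix C (diam_exponent C)"
proof -
  obtain l where l: "cantor_diam C = (1/2)^l" "same_prefix C l"
    using assms by (rule cantor_diam_nontrivial)
  moreover have "diam_exponent C = l"
    unfolding diam_exponent_def using l(1) by (intro Least_equality) (simp_all add: power_one_over)
  ultimately show "cantor_diam C = (1/2)^diam_exponent C" "same_prefix C (diam_exponent C)"
    by simp_all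
qed

lemma le_diam_exponent:
  assumes "nontrivial C" "cantor_diam C \<le> (1/2)^k"
  shows "k \<le> diam_exponent C"
  using assms diam_exponent(1)[OF assms(1)] by (simp add: power_decreasing_iff)

lemma card_le_if_suminf_le:
  fixes c :: "nat \<Rightarrow> real"
  assumes sum: "(\<Sum>n. ennreal (c n)) \<le> ennreal \<epsilon>"
    and "\<And>n. n \<in> Q \<Longrightarrow> c n = r" and "r > 0" "\<epsilon> \<ge> 0"
  shows "finite Q" "real (card Q) * r \<le> \<epsilon>"
proof -
  have bound: "real (card F) * r \<le> \<epsilon>" if "finite F" "F \<subseteq> Q" for F
  proof -
    have "ennreal (real (card F) * r) = (\<Sum>n\<in>F. ennreal r)"
      using assms(3) by (simp add: ennreal_of_nat_eq_real_of_nat ennreal_mult')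
    also have "\<dots> = (\<Sum>n\<in>F. ennreal (c n))"
      using that assms(2) by (intro sum.cong) auto
    also have "\<dots> \<le> (\<Sum>n. ennreal (c n))"
      by (rule sum_le_suminf) (use that in auto)
    also note sum
    finally show ?thesis
      using assms(4) by simp
  qed
  show "finite Q"
  proof (rule ccontr)
    assume "infinite Q"
    then obtain F where "finite F" "card F = Suc (nat \<lceil>\<epsilon> / r\<rceil>)" "F \<subseteq> Q"
      using infinite_arbitrarily_large by blast
    moreover have "\<epsilon> / r < real (Suc (nat \<lceil>\<epsilon> / r\<rceil>))"
      using real_nat_ceiling_ge[of "\<epsilon> / r"] by simp
    then have "\<epsilon> < real (Suc (nat \<lceil>\<epsilon> / r\<rceil>)) * r"
      using assms(3) by (simp add: pos_divide_less_eq)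
    ultimately show False using bound by fastforce
  qed
  then show "real (card Q) * r \<le> \<epsilon>"
    by (rule bound) simp
qed

lemma card_SIGMA_le_geometric:
  assumes "c \<ge> 0" "\<And>j. j < n \<Longrightarrow> finite (S j)"
    and "\<And>j. j < n \<Longrightarrow> real (card (S j)) \<le> c * (1/2)^Suc j"
  shows "real (card (SIGMA j:{..<n}. S j)) \<le> c"
proof -
  have "real (card (SIGMA j:{..<n}. S j)) = (\<Sum>j<n. real (card (S j)))"
    using assms(2) by (simp add: card_SigmaI)
  also have "\<dots> \<le> (\<Sum>j<n. c * (1/2)^Suc j)"
    using assms(3) by (intro sum_mono) auto
  also have "\<dots> = c * (1 - (1/2)^n)"
    by (induction n) (simp_all add: algebra_simps)
  also have "\<dots> \<le> c"
    using assms(1) by (simp add: mult_left_le)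
  finally show ?thesis .
qed

lemma card_cover_level_le:
  fixes C :: "nat \<Rightarrow> nat \<Rightarrow> (nat \<Rightarrow> bool) set" and e :: "nat \<Rightarrow> nat"
  assumes level: "\<And>j n. nontrivial (C j n) \<Longrightarrow> j + 3 \<le> e (diam_exponent (C j n))"
    and cost: "\<And>j. (\<Sum>n. ennreal (estar e (cantor_diam (C j n)))) \<le> ennreal ((1/2)^(j+4))"
  shows "finite {(j, n). nontrivial (C j n) \<and> e (diam_exponent (C j n)) = k + 3}"
    and "card {(j, n). nontrivial (C j n) \<and> e (diam_exponent (C j n)) = k + 3} \<le> 2^k"
proof -
  define S where "S j = {n. nontrivial (C j n) \<and> e (diam_exponent (C j n)) = k + 3}" for j
  have S: "finite (S j) \<and> real (card (S j)) \<le> 2^k * (1/2)^Suc j" for j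
  proof -
    have "estar e (cantor_diam (C j n)) = (1/2)^(k+3)" if "n \<in> S j" for n
      using that diam_exponent(1) estar_half_power unfolding S_def by auto
    then have "finite (S j)" "real (card (S j)) * (1/2)^(k+3) \<le> (1/2)^(j+4)"
      by (rule card_le_if_suminf_le[OF cost]; simp)+
    then show ?thesis by (simp add: field_simps power_add)
  qed
  have eq: "{(j, n). nontrivial (C j n) \<and> e (diam_exponent (C j n)) = k + 3} = (SIGMA j:{..<k+3}. S j)"
    using level unfolding S_def by force
  show "finite {(j, n). nontrivial (C j n) \<and> e (diam_exponent (C j n)) = k + 3}"
    unfolding eq using S by auto
  have "real (card (SIGMA j:{..<k+3}. S j)) \<le> 2^k"
    using S by (intro card_SIGMA_le_geometric) auto
  then show "card {(j, n). nontrivial (C j n) \<and> e (diam_exponent (C j n)) = k + 3} \<le> 2^k"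
    unfolding eq by (metis of_nat_le_iff of_nat_numeral of_nat_power)
qed

lemma power2_add_eq_imp_eq:
  fixes k k' f f' :: nat
  assumes "f < 2^k" "f' < 2^k'" "2^k + f = 2^k' + f'"
  shows "k = k'"
proof (rule ccontr)
  have less: "2^k + f < 2^k' + f'" if "k < k'" "f < 2^k" for k k' f f' :: nat
  proof -
    have "(2::nat)^k + f < 2^Suc k" using that(2) by simp
    also have "\<dots> \<le> 2^k'" using that(1) by (intro power_increasing) auto
    finally show ?thesis by simp
  qed
  assume "k \<noteq> k'"
  then show False
    using less[of k k' f f'] less[of k' k f' f] assms by linarith
qed

lemma exists_inj_index_below_level:
  fixes lev :: "'a::countable \<Rightarrow> nat"
  assumes "\<And>k. finite {a\<in>T. lev a = k}" "\<And>k. card {a\<in>T. lev a = k} \<le> 2^k"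
  obtains idx :: "'a \<Rightarrow> nat" where "inj idx" "\<And>a. a \<in> T \<Longrightarrow> idx a < 2^(lev a + 2)"
proof -
  have "\<forall>k. \<exists>f. inj_on f {a\<in>T. lev a = k} \<and> (\<forall>a\<in>{a\<in>T. lev a = k}. f a < (2::nat)^k)"
  proof
    fix k
    obtain f where f: "bij_betw f {a\<in>T. lev a = k} {0..<card {a\<in>T. lev a = k}}"
      using ex_bij_betw_finite_nat[OF assms(1)] by blast
    have "f a < 2^k" if "a \<in> {a\<in>T. lev a = k}" for a
      using bij_betwE[OF f] that assms(2)[of k] by (meson atLeastLessThan_iff less_le_trans)
    with f show "\<exists>f. inj_on f {a\<in>T. lev a = k} \<and> (\<forall>a\<in>{a\<in>T. lev a = k}. f a < (2::nat)^k)"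
      by (auto simp: bij_betw_def)
  qed
  from choice[OF this] obtain F where F: "\<And>k. inj_on (F k) {a\<in>T. lev a = k}"
    "\<And>k a. a \<in> T \<Longrightarrow> lev a = k \<Longrightarrow> F k a < (2::nat)^k"
    by blast
  define idx where
    "idx a = (if a \<in> T then 2 * (2^lev a + F (lev a) a) else 2 * to_nat a + 1)" for a
  have "inj idx"
  proof (rule injI)
    fix a b assume eq: "idx a = idx b"
    consider "a \<in> T" "b \<in> T" | "a \<notin> T" "b \<notin> T" | "(a \<in> T) \<noteq> (b \<in> T)"
      by blast
    then show "a = b"
    proof cases
      case 1
      with eq have sum_eq: "2^lev a + F (lev a) a = 2^lev b + F (lev b) b"
        by (simp add: idx_def)
      have "lev a = lev b"
        using F(2)[OF 1(1) refl] F(2)[OF 1(2) refl] sum_eq by (rule power2_add_eq_imp_eq)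
      with sum_eq have "F (lev a) a = F (lev a) b" by simp
      then show ?thesis
        using 1 \<open>lev a = lev b\<close> by (intro inj_onD[OF F(1)]) auto
    next
      case 2
      with eq show ?thesis by (simp add: idx_def)
    next
      case 3
      then have "even (idx a) \<noteq> even (idx b)"
        by (cases "a \<in> T") (simp_all add: idx_def)
      with eq show ?thesis by simp
    qed
  qed
  moreover have "idx a < 2^(lev a + 2)" if "a \<in> T" for a
  proof -
    have "2^lev a + F (lev a) a < (2::nat)^Suc (lev a)"
      using F(2)[OF that refl] by simp
    then show ?thesis using that by (simp add: idx_def)
  qed
  ultimately show ?thesis using that by blast
qed

lemma le_if_below_Least_power:
  fixes h :: "nat \<Rightarrow> nat"
  assumes "mono h" "k < (LEAST n. l < h (2^n))" "i \<le> 2^k"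
  shows "h i \<le> l"
proof -
  have "h i \<le> h (2^k)" using assms(1,3) by (rule monoD)
  moreover have "\<not> l < h (2^k)" using assms(2) by (rule not_less_Least)
  ultimately show ?thesis by simp
qed

lemma J_ideal_if_covers:
  fixes C :: "nat \<Rightarrow> nat \<Rightarrow> (nat \<Rightarrow> bool) set" and idx :: "nat \<times> nat \<Rightarrow> nat"
  assumes "inj idx" "\<And>j. A \<subseteq> (\<Union>n. C j n)"
    and "\<And>j n. same_prefix (C j n) (h (idx (j, n)))"
  shows "A \<in> J_ideal h"
proof -
  define rep where "rep i = (SOME x. \<exists>j n. idx (j, n) = i \<and> x \<in> C j n)" for i
  define \<sigma> where "\<sigma> i = map (rep i) [0..<h i]" for i
  have rep: "rep (idx (j, n)) \<in> C j n" if "x \<in> C j n" for j n x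
  proof -
    have "\<exists>j' n'. idx (j', n') = idx (j, n) \<and> rep (idx (j, n)) \<in> C j' n'"
      unfolding rep_def by (rule someI[of _ x]) (use that in blast)
    then obtain j' n' where idx: "idx (j', n') = idx (j, n)" and rep: "rep (idx (j, n)) \<in> C j' n'"
      by blast
    from idx have "(j', n') = (j, n)" by (rule injD[OF assms(1)])
    with rep show ?thesis by simp
  qed
  have prefix: "init_seg (\<sigma> (idx (j, n))) x" if "x \<in> C j n" for j n x
  proof -
    have "x i = rep (idx (j, n)) i" if "i < h (idx (j, n))" for i
      using assms(3)[of j n] rep[OF \<open>x \<in> C j n\<close>] \<open>x \<in> C j n\<close> that
      unfolding same_prefix_def by blast
    then show ?thesis by (simp add: init_seg_def \<sigma>_def)
  qed
  have "x \<in> inf_often_set \<sigma>" if "x \<in> A" for x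
  proof -
    have "\<forall>j. \<exists>n. x \<in> C j n" using assms(2) that by blast
    from choice[OF this] obtain N where N: "\<And>j. x \<in> C j (N j)" by blast
    have "inj (\<lambda>j. idx (j, N j))"
    proof (rule injI)
      fix j j' assume "idx (j, N j) = idx (j', N j')"
      then have "(j, N j) = (j', N j')" by (rule injD[OF assms(1)])
      then show "j = j'" by simp
    qed
    then have "infinite (range (\<lambda>j. idx (j, N j)))" by (rule range_inj_infinite)
    moreover have "range (\<lambda>j. idx (j, N j)) \<subseteq> {i. init_seg (\<sigma> i) x}"
      using prefix N by blast
    ultimately have "infinite {i. init_seg (\<sigma> i) x}" by (rule infinite_super[rotated])
    then show ?thesis unfolding inf_often_set_def by (simp add: frequently_cofinite)
  qed
  moreover have "length (\<sigma> i) = h i" for i by (simp add: \<sigma>_def)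
  ultimately show ?thesis unfolding J_ideal_def by blast
qed

lemma exists_index_for_covers:
  fixes C :: "nat \<Rightarrow> nat \<Rightarrow> (nat \<Rightarrow> bool) set" and e h K :: "nat \<Rightarrow> nat"
  assumes "mono e" "mono h" "\<And>l. e l \<le> (LEAST n. l < h (2^n))"
    and "\<And>j. j + 3 \<le> e (K j)" "\<And>j n. cantor_diam (C j n) \<le> (1/2)^K j"
    and "\<And>j. (\<Sum>n. ennreal (estar e (cantor_diam (C j n)))) \<le> ennreal ((1/2)^(j+4))"
  obtains idx :: "nat \<times> nat \<Rightarrow> nat"
  where "inj idx" "\<And>j n. same_prefix (C j n) (h (idx (j, n)))"
proof -
  define L where "L j n = diam_exponent (C j n)" for j n
  have level: "j + 3 \<le> e (L j n)" if "nontrivial (C j n)" for j n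
    using assms(4)[of j] monoD[OF assms(1) le_diam_exponent[OF that assms(5)]]
    unfolding L_def by linarith
  define T where "T = {(j, n). nontrivial (C j n)}"
  define lev where "lev = (\<lambda>(j, n). e (L j n) - 3)"
  have "{a\<in>T. lev a = k} = {(j, n). nontrivial (C j n) \<and> e (diam_exponent (C j n)) = k + 3}" for k
    using level unfolding T_def lev_def L_def by force
  then have "finite {a\<in>T. lev a = k}" "card {a\<in>T. lev a = k} \<le> 2^k" for k
    using card_cover_level_le[OF level[unfolded L_def] assms(6)] by simp_all
  then obtain idx where "inj idx" and idx_bound: "\<And>a. a \<in> T \<Longrightarrow> idx a < (2::nat)^(lev a + 2)"
    by (rule exists_inj_index_below_level) blast
  moreover have "same_prefix (C j n) (h (idx (j, n)))" for j n
  proof (cases "nontrivial (C j n)")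
    case True
    have "h (idx (j, n)) \<le> L j n"
    proof (rule le_if_below_Least_power[OF assms(2)])
      show "e (L j n) - 1 < (LEAST m. L j n < h (2^m))"
        using assms(3)[of "L j n"] level[OF True] by linarith
      have "e (L j n) - 3 + 2 = e (L j n) - 1" using level[OF True] by linarith
      moreover have "(j, n) \<in> T" using True unfolding T_def by simp
      ultimately show "idx (j, n) \<le> 2^(e (L j n) - 1)"
        using idx_bound[of "(j, n)"] unfolding lev_def by simp
    qed
    then show ?thesis
      using diam_exponent(2)[OF True] unfolding L_def same_prefix_def by auto
  next
    case False
    then show ?thesis unfolding nontrivial_def same_prefix_def by auto
  qed
  ultimately show ?thesis using that by blast
qed

theorem lemma3p3:
  fixes e h :: "nat \<Rightarrow> nat"
  assumes "mono e" and "\<forall>m. \<exists>n. m < e n"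
    and "mono h" and "\<forall>m. \<exists>n. m < h n"
    and "\<forall>l. e l \<le> (LEAST n. l < h (2 ^ n))"
  shows "null_f (estar e) \<subseteq> J_ideal h"
proof
  fix A assume "A \<in> null_f (estar e)"
  then have null: "hausdorff (estar e) A = 0" by (simp add: null_f_def)
  have "\<forall>j. \<exists>k. j + 3 \<le> e k" using assms(2) by (metis less_imp_le)
  from choice[OF this] obtain K where K: "\<And>j. j + 3 \<le> e (K j)" by blast
  have "\<forall>j. \<exists>D. A \<subseteq> (\<Union>n. D n) \<and> (\<forall>n. cantor_diam (D n) \<le> (1/2)^K j)
      \<and> (\<Sum>n. ennreal (estar e (cantor_diam (D n)))) < ennreal ((1/2)^(j+4))"
    by (metis hausdorff_eq_0_imp_cover[OF null] zero_less_power zero_less_divide_1_iff zero_less_numeral)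
  then obtain C where cover: "\<And>j. A \<subseteq> (\<Union>n. C j n)" "\<And>j n. cantor_diam (C j n) \<le> (1/2)^K j"
    "\<And>j. (\<Sum>n. ennreal (estar e (cantor_diam (C j n)))) < ennreal ((1/2)^(j+4))"
    by (metis choice)
  obtain idx where "inj idx" and prefix: "\<And>j n. same_prefix (C j n) (h (idx (j, n)))"
    using assms(1,3) assms(5)[rule_format] K cover(2) less_imp_le[OF cover(3)]
    by (rule exists_index_for_covers) blast+
  show "A \<in> J_ideal h" by (rule J_ideal_if_covers[OF \<open>inj idx\<close> cover(1) prefix])
qed

end
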